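(* Let $\mathcal{X}$ and $\mathcal{Y}$ be finite sets, $g:\mathcal{X}\times\mathcal{Y}\to\mathbb{R}_{>0}$ a strictly positive function, and $h:\mathcal{Y}\to\mathbb{R}_{\ge0}$ a non-negative function. Then, writing $X\sim p$ and $Y\sim q$ in all expectations, \[ \max_{q\in\Delta(\mathcal{Y})}\min_{x\in\mathcal{X}}\mathbb{E}\frac{g(x,Y)}{h(Y)} =\min_{p\in\Delta(\mathcal{X})}\max_{y\in\mathcal{Y}}\frac{\mathbb{E}\,g(X,y)}{h(y)} =\max_{q\in\Delta(\mathcal{Y})}\min_{p\in\Delta(\mathcal{X})}\frac{\mathbb{E}\,g(X,Y)}{\mathbb{E}\,h(Y)} =\min_{p\in\Delta(\mathcal{X})}\max_{q\in\Delta(\mathcal{Y})}\frac{\mathbb{E}\,g(X,Y)}{\mathbb{E}\,h(Y)}. \]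
   Context: For a finite set $U$, $\Delta(U)$ denotes the set of all probability distributions on $U$; $X$ and $Y$ are independent. *)

theory Defs
  imports "HOL-Analysis.Analysis"
begin

definition prob_simplex :: "('a::finite \<Rightarrow> real) set" where
  "prob_simplex = {p. (\<forall>u. 0 \<le> p u) \<and> (\<Sum>u\<in>UNIV. p u) = 1}"

text \<open>Values in the extended reals: division by h y = 0 gives +infinity
  (numerators are positive), and 0 * infinity = 0.\<close>

definition E1 :: "('x::finite \<Rightarrow> 'y::finite \<Rightarrow> real) \<Rightarrow> ('y \<Rightarrow> real) \<Rightarrow> ('y \<Rightarrow> real) \<Rightarrow> 'x \<Rightarrow> ereal" where
  "E1 g h q x = (\<Sum>y\<in>UNIV. ereal (q y) * (ereal (g x y) / ereal (h y)))"

definition E2 :: "('x::finite \<Rightarrow> 'y::finite \<Rightarrow> real) \<Rightarrow> ('y \<Rightarrow> real) \<Rightarrow> ('x \<Rightarrow> real) \<Rightarrow> 'y \<Rightarrow> ereal" where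
  "E2 g h p y = ereal (\<Sum>x\<in>UNIV. p x * g x y) / ereal (h y)"

definition R :: "('x::finite \<Rightarrow> 'y::finite \<Rightarrow> real) \<Rightarrow> ('y \<Rightarrow> real) \<Rightarrow> ('x \<Rightarrow> real) \<Rightarrow> ('y \<Rightarrow> real) \<Rightarrow> ereal" where
  "R g h p q = ereal (\<Sum>x\<in>UNIV. \<Sum>y\<in>UNIV. p x * q y * g x y) / ereal (\<Sum>y\<in>UNIV. q y * h y)"

definition is_max :: "ereal \<Rightarrow> ereal set \<Rightarrow> bool" where
  "is_max v S \<longleftrightarrow> v \<in> S \<and> (\<forall>s\<in>S. s \<le> v)"

definition is_min :: "ereal \<Rightarrow> ereal set \<Rightarrow> bool" where
  "is_min v S \<longleftrightarrow> v \<in> S \<and> (\<forall>s\<in>S. v \<le> s)"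

end

theory Submission
  imports Defs
begin

text \<open>If h vanishes at some y0, the point mass at y0 makes all four quantities infinite.
  Otherwise put A x y = g x y / h y: the first two quantities are the lower and the upper value
  of the matrix game A, which agree by von Neumann's minimax theorem (a consequence of the
  separating hyperplane theorem). The ratio E g(X,Y) / E h(Y) is a monotone function of an
  average over p, and a ratio of two averages over q, so both of its inner extrema are attained
  at point masses. This identifies the fourth quantity with the second, and the third with the
  first after the change of measure q \<mapsto> q h / E h(Y), a bijection of the simplex.\<close>

lemma prob_simplexD:
  assumes "p \<in> prob_simplex"
  shows "0 \<le> p u" and "(\<Sum>u\<in>UNIV. p u) = 1"
  using assms unfolding prob_simplex_def by auto

lemma indicator_in_prob_simplex: "indicator {a} \<in> (prob_simplex :: ('a::finite \<Rightarrow> real) set)"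
  unfolding prob_simplex_def by (simp add: indicator_def)

lemma sum_indicator_singleton_mult:
  fixes c :: "'a::finite \<Rightarrow> real"
  shows "(\<Sum>u\<in>UNIV. indicator {a} u * c u) = c a"
  by (simp add: indicator_times_eq_if sum.delta)

lemma prob_simplex_average_ge_Min:
  fixes c :: "'a::finite \<Rightarrow> real"
  assumes "p \<in> prob_simplex"
  shows "Min (range c) \<le> (\<Sum>x\<in>UNIV. p x * c x)"
proof -
  have "Min (range c) = (\<Sum>x\<in>UNIV. p x * Min (range c))"
    using prob_simplexD[OF assms] by (simp add: sum_distrib_right[symmetric])
  also have "\<dots> \<le> (\<Sum>x\<in>UNIV. p x * c x)"
    using prob_simplexD[OF assms] by (intro sum_mono mult_left_mono) auto
  finally show ?thesis .
qed

lemma prob_simplex_average_le_Max: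
  fixes c :: "'a::finite \<Rightarrow> real"
  assumes "p \<in> prob_simplex"
  shows "(\<Sum>x\<in>UNIV. p x * c x) \<le> Max (range c)"
proof -
  have "(\<Sum>x\<in>UNIV. p x * c x) \<le> (\<Sum>x\<in>UNIV. p x * Max (range c))"
    using prob_simplexD[OF assms] by (intro sum_mono mult_left_mono) auto
  also have "\<dots> = Max (range c)"
    using prob_simplexD[OF assms] by (simp add: sum_distrib_right[symmetric])
  finally show ?thesis .
qed

lemma prob_simplex_average_pos:
  fixes c :: "'a::finite \<Rightarrow> real"
  assumes "p \<in> prob_simplex" and "\<And>x. 0 < c x"
  shows "0 < (\<Sum>x\<in>UNIV. p x * c x)"
proof -
  have "0 < Min (range c)" using assms(2) by (simp add: Min_gr_iff)
  then show ?thesis using prob_simplex_average_ge_Min[OF assms(1), of c] by linarith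
qed

lemma sum_mixed_strategies_swap:
  fixes A :: "'x::finite \<Rightarrow> 'y::finite \<Rightarrow> real"
  shows "(\<Sum>x\<in>UNIV. p x * (\<Sum>y\<in>UNIV. q y * A x y)) = (\<Sum>y\<in>UNIV. q y * (\<Sum>x\<in>UNIV. p x * A x y))"
  unfolding sum_distrib_left by (subst sum.swap) (simp add: mult.left_commute)

lemma mixed_weak_duality:
  fixes A :: "'x::finite \<Rightarrow> 'y::finite \<Rightarrow> real"
  assumes "p \<in> prob_simplex" and "q \<in> prob_simplex"
  shows "Min (range (\<lambda>x. \<Sum>y\<in>UNIV. q y * A x y)) \<le> Max (range (\<lambda>y. \<Sum>x\<in>UNIV. p x * A x y))"
  using prob_simplex_average_ge_Min[OF assms(1), of "\<lambda>x. \<Sum>y\<in>UNIV. q y * A x y"]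
    prob_simplex_average_le_Max[OF assms(2), of "\<lambda>y. \<Sum>x\<in>UNIV. p x * A x y"]
    sum_mixed_strategies_swap[of p q A]
  by linarith

lemma nonneg_if_ray_bounded_below:
  fixes a b c :: real
  assumes "\<And>t. 0 \<le> t \<Longrightarrow> b < c + t * a"
  shows "0 \<le> a"
proof (rule ccontr)
  assume "\<not> 0 \<le> a"
  define t where "t = max 0 ((c - b) / - a)"
  have "0 < - a" using \<open>\<not> 0 \<le> a\<close> by simp
  moreover have "(c - b) / - a \<le> t" unfolding t_def by simp
  ultimately have "c - b \<le> t * - a" using pos_divide_le_eq by blast
  moreover have "b < c + t * a" using assms by (simp add: t_def)
  ultimately show False by simp
qed

lemma upper_orthant_separation:
  fixes K :: "(real^'n) set"
  assumes "convex K" "compact K" "K \<noteq> {}" and below: "\<forall>z\<in>K. \<exists>i. z$i < v"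
  shows "\<exists>p\<in>prob_simplex. \<forall>z\<in>K. (\<Sum>i\<in>UNIV. p i * z$i) < v"
proof -
  define C :: "(real^'n) set" where "C = {z. \<forall>i. v \<le> z$i}"
  have "C = (\<Inter>i. {z. inner (axis i 1) z \<ge> v})"
    by (auto simp: C_def cart_eq_inner_axis inner_commute)
  then have "convex C" by (simp add: convex_INT convex_halfspace_ge)
  moreover have "closed C" unfolding C_def
    by (intro closed_Collect_all closed_Collect_le continuous_intros)
  moreover have "K \<inter> C = {}"
    unfolding C_def disjoint_iff using below by (metis mem_Collect_eq not_le)
  ultimately obtain a b where sep_K: "\<forall>z\<in>K. inner a z < b" and sep_C: "\<forall>z\<in>C. b < inner a z"
    using separating_hyperplane_compact_closed[of K C] assms(1-3) by blast
  have inner_eq: "inner a z = (\<Sum>i\<in>UNIV. a$i * z$i)" for z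
    by (simp add: inner_vec_def)
  define s where "s = (\<Sum>i\<in>UNIV. a$i)"
  \<comment> \<open>C is unbounded upwards in every coordinate, so the normal a is nonnegative;
    normalised, it is the required p.\<close>
  have ray: "b < s * v + t * a$i" if "0 \<le> t" for i t
  proof -
    have "(\<chi> j. v) + t *\<^sub>R axis i 1 \<in> C" unfolding C_def using that by (simp add: axis_def)
    moreover have "inner a ((\<chi> j. v) + t *\<^sub>R axis i 1) = s * v + t * a$i"
      by (simp add: inner_add_right inner_axis inner_eq s_def sum_distrib_right)
    ultimately show ?thesis using sep_C by fastforce
  qed
  have a_nonneg: "0 \<le> a$i" for i
    using ray by (rule nonneg_if_ray_bounded_below)
  obtain z0 where "z0 \<in> K" using assms(3) by blast
  have "s \<noteq> 0"
  proof
    assume "s = 0"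
    then have "a = 0" using a_nonneg unfolding s_def by (simp add: sum_nonneg_eq_0_iff vec_eq_iff)
    then show False using sep_K ray[of 0] \<open>z0 \<in> K\<close> \<open>s = 0\<close> by force
  qed
  then have "0 < s" using a_nonneg unfolding s_def by (simp add: sum_nonneg order_le_neq_trans)
  define p where "p i = a$i / s" for i
  have "p \<in> prob_simplex" unfolding prob_simplex_def p_def
    using a_nonneg \<open>0 < s\<close> by (simp add: sum_divide_distrib[symmetric] s_def)
  moreover have "(\<Sum>i\<in>UNIV. p i * z$i) < v" if "z \<in> K" for z
  proof -
    have "(\<Sum>i\<in>UNIV. a$i * z$i) < s * v" using sep_K ray[of 0] that by (force simp: inner_eq)
    then show ?thesis using \<open>0 < s\<close>
      by (simp add: p_def sum_divide_distrib[symmetric] pos_divide_less_eq mult.commute)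
  qed
  ultimately show ?thesis by blast
qed

lemma convex_mixed_columns:
  fixes A :: "'x::finite \<Rightarrow> 'y::finite \<Rightarrow> real"
  shows "convex ((\<lambda>q. \<chi> x. \<Sum>y\<in>UNIV. q y * A x y) ` prob_simplex)"
proof (rule convexI)
  fix a b :: "real^'x" and u w :: real
  assume "a \<in> (\<lambda>q. \<chi> x. \<Sum>y\<in>UNIV. q y * A x y) ` prob_simplex"
    and "b \<in> (\<lambda>q. \<chi> x. \<Sum>y\<in>UNIV. q y * A x y) ` prob_simplex"
    and uw: "0 \<le> u" "0 \<le> w" "u + w = 1"
  then obtain qa qb where qa: "qa \<in> prob_simplex" "a = (\<chi> x. \<Sum>y\<in>UNIV. qa y * A x y)"
    and qb: "qb \<in> prob_simplex" "b = (\<chi> x. \<Sum>y\<in>UNIV. qb y * A x y)" by blast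
  define q where "q y = u * qa y + w * qb y" for y
  have "q \<in> prob_simplex" using qa qb uw
    unfolding prob_simplex_def q_def by (simp add: sum.distrib sum_distrib_left[symmetric])
  moreover have "u *\<^sub>R a + w *\<^sub>R b = (\<chi> x. \<Sum>y\<in>UNIV. q y * A x y)"
    unfolding qa qb q_def by (simp add: vec_eq_iff sum_distrib_left sum.distrib algebra_simps)
  ultimately show "u *\<^sub>R a + w *\<^sub>R b \<in> (\<lambda>q. \<chi> x. \<Sum>y\<in>UNIV. q y * A x y) ` prob_simplex"
    by blast
qed

lemma mixed_strategy_alternative:
  fixes A :: "'x::finite \<Rightarrow> 'y::finite \<Rightarrow> real"
  assumes "\<forall>p\<in>prob_simplex. \<exists>y. v \<le> (\<Sum>x\<in>UNIV. p x * A x y)"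
  shows "\<exists>q\<in>prob_simplex. \<forall>x. v \<le> (\<Sum>y\<in>UNIV. q y * A x y)"
proof (rule ccontr)
  assume no_q: "\<not> ?thesis"
  define column :: "'y \<Rightarrow> real^'x" where "column y = (\<chi> x. A x y)" for y
  define K where "K = convex hull (range column)"
  have "column y = (\<chi> x. \<Sum>y'\<in>UNIV. indicator {y} y' * A x y')" for y
    by (simp add: column_def sum_indicator_singleton_mult)
  then have "range column \<subseteq> (\<lambda>q. \<chi> x. \<Sum>y\<in>UNIV. q y * A x y) ` prob_simplex"
    using indicator_in_prob_simplex by blast
  then have "K \<subseteq> (\<lambda>q. \<chi> x. \<Sum>y\<in>UNIV. q y * A x y) ` prob_simplex"
    unfolding K_def using convex_mixed_columns by (rule hull_minimal)
  then have "\<forall>z\<in>K. \<exists>x. z$x < v" using no_q by (fastforce simp: not_le)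
  moreover have "convex K" "compact K" "K \<noteq> {}"
    unfolding K_def by (auto simp: finite_imp_compact_convex_hull)
  ultimately obtain p where "p \<in> prob_simplex" and "\<forall>z\<in>K. (\<Sum>x\<in>UNIV. p x * z$x) < v"
    using upper_orthant_separation by blast
  moreover obtain y where "v \<le> (\<Sum>x\<in>UNIV. p x * A x y)"
    using assms \<open>p \<in> prob_simplex\<close> by blast
  moreover have "column y \<in> K" unfolding K_def by (simp add: hull_inc)
  ultimately show False by (fastforce simp: column_def)
qed

lemma minimax_saddle_point:
  fixes A :: "'x::finite \<Rightarrow> 'y::finite \<Rightarrow> real"
  obtains v p q where "p \<in> prob_simplex" and "q \<in> prob_simplex"
    and "\<And>y. (\<Sum>x\<in>UNIV. p x * A x y) \<le> v" and "\<And>x. v \<le> (\<Sum>y\<in>UNIV. q y * A x y)"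
proof -
  define upper where "upper p = Max (range (\<lambda>y. \<Sum>x\<in>UNIV. p x * A x y))" for p :: "'x \<Rightarrow> real"
  define lower where "lower q = Min (range (\<lambda>x. \<Sum>y\<in>UNIV. q y * A x y))" for q :: "'y \<Rightarrow> real"
  define v where "v = (INF p\<in>prob_simplex. upper p)"
  have weak: "lower q \<le> upper p" if "p \<in> prob_simplex" "q \<in> prob_simplex" for p q
    unfolding upper_def lower_def using that by (rule mixed_weak_duality)
  have "\<exists>y. v \<le> (\<Sum>x\<in>UNIV. p x * A x y)" if p: "p \<in> prob_simplex" for p
  proof -
    have "v \<le> upper p"
      unfolding v_def using p weak[OF _ indicator_in_prob_simplex] by (intro cInf_lower bdd_belowI2) auto
    moreover have "upper p \<in> range (\<lambda>y. \<Sum>x\<in>UNIV. p x * A x y)"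
      unfolding upper_def by (intro Max_in) auto
    ultimately show ?thesis by auto
  qed
  then obtain q where q: "q \<in> prob_simplex" "\<And>x. v \<le> (\<Sum>y\<in>UNIV. q y * A x y)"
    using mixed_strategy_alternative by blast
  \<comment> \<open>By weak duality the same level v also satisfies the hypothesis of the alternative
    for the column player, i.e. for the game - A transposed.\<close>
  have "\<exists>x. - v \<le> (\<Sum>y\<in>UNIV. q' y * - A x y)" if q': "q' \<in> prob_simplex" for q'
  proof -
    have "lower q' \<le> v"
      unfolding v_def using q' weak indicator_in_prob_simplex by (intro cINF_greatest) auto
    moreover have "lower q' \<in> range (\<lambda>x. \<Sum>y\<in>UNIV. q' y * A x y)"
      unfolding lower_def by (intro Min_in) auto
    ultimately show ?thesis by (auto simp: sum_negf)
  qed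
  then obtain p where p: "p \<in> prob_simplex" "\<And>y. - v \<le> (\<Sum>x\<in>UNIV. p x * - A x y)"
    using mixed_strategy_alternative[where A = "\<lambda>y x. - A x y"] by blast
  show thesis
  proof
    show "(\<Sum>x\<in>UNIV. p x * A x y) \<le> v" for y using p(2)[of y] by (simp add: sum_negf)
  qed (use p q in auto)
qed

lemma Min_range_ereal: "Min (range (\<lambda>x::'a::finite. ereal (f x))) = ereal (Min (range f))"
  using mono_Min_commute[of ereal "range f"] by (simp add: mono_def image_image)

lemma Max_range_ereal: "Max (range (\<lambda>x::'a::finite. ereal (f x))) = ereal (Max (range f))"
  using mono_Max_commute[of ereal "range f"] by (simp add: mono_def image_image)

lemma matrix_game_value:
  fixes A :: "'x::finite \<Rightarrow> 'y::finite \<Rightarrow> real"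
  obtains v where
    "is_max (ereal v) ((\<lambda>q. Min (range (\<lambda>x. ereal (\<Sum>y\<in>UNIV. q y * A x y)))) ` prob_simplex)"
    and "is_min (ereal v) ((\<lambda>p. Max (range (\<lambda>y. ereal (\<Sum>x\<in>UNIV. p x * A x y)))) ` prob_simplex)"
proof -
  obtain v ps qs where ps: "ps \<in> prob_simplex" "\<And>y. (\<Sum>x\<in>UNIV. ps x * A x y) \<le> v"
    and qs: "qs \<in> prob_simplex" "\<And>x. v \<le> (\<Sum>y\<in>UNIV. qs y * A x y)"
    using minimax_saddle_point by metis
  have lower_le: "Min (range (\<lambda>x. \<Sum>y\<in>UNIV. q y * A x y)) \<le> v" if "q \<in> prob_simplex" for q
    using ps(2) by (intro order_trans[OF mixed_weak_duality[OF ps(1) that]]) simp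
  have upper_ge: "v \<le> Max (range (\<lambda>y. \<Sum>x\<in>UNIV. p x * A x y))" if "p \<in> prob_simplex" for p
    using qs(2) by (intro order_trans[OF _ mixed_weak_duality[OF that qs(1)]]) simp
  have "Min (range (\<lambda>x. \<Sum>y\<in>UNIV. qs y * A x y)) = v"
    using lower_le[OF qs(1)] qs(2) by (simp add: antisym Min_ge_iff)
  then have "is_max (ereal v) ((\<lambda>q. ereal (Min (range (\<lambda>x. \<Sum>y\<in>UNIV. q y * A x y)))) ` prob_simplex)"
    unfolding is_max_def using lower_le qs(1) by (auto intro!: image_eqI[of _ _ qs])
  moreover have "Max (range (\<lambda>y. \<Sum>x\<in>UNIV. ps x * A x y)) = v"
    using upper_ge[OF ps(1)] ps(2) by (simp add: antisym Max_le_iff)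
  then have "is_min (ereal v) ((\<lambda>p. ereal (Max (range (\<lambda>y. \<Sum>x\<in>UNIV. p x * A x y)))) ` prob_simplex)"
    unfolding is_min_def using upper_ge ps(1) by (auto intro!: image_eqI[of _ _ ps])
  ultimately show thesis using that unfolding Min_range_ereal Max_range_ereal by blast
qed

lemma is_min_imp_Inf_eq: "is_min m S \<Longrightarrow> Inf S = m"
  unfolding is_min_def by (meson Inf_greatest Inf_lower antisym)

lemma is_max_imp_Sup_eq: "is_max m S \<Longrightarrow> Sup S = m"
  unfolding is_max_def by (meson Sup_least Sup_upper antisym)

lemma R_eq_row_average:
  "R g h p q = ereal (\<Sum>x\<in>UNIV. p x * (\<Sum>y\<in>UNIV. q y * g x y)) / ereal (\<Sum>y\<in>UNIV. q y * h y)"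
  unfolding R_def by (simp add: sum_distrib_left mult.assoc)

lemma R_eq_column_average:
  "R g h p q = ereal (\<Sum>y\<in>UNIV. q y * (\<Sum>x\<in>UNIV. p x * g x y)) / ereal (\<Sum>y\<in>UNIV. q y * h y)"
  unfolding R_eq_row_average sum_mixed_strategies_swap[of p q g] ..

lemma mono_ereal_divide: "0 \<le> d \<Longrightarrow> mono (\<lambda>t. ereal t / ereal d)"
  by (cases "d = 0") (auto intro!: monoI ereal_mult_right_mono divide_right_mono)

lemma is_min_mono_average:
  fixes c :: "'a::finite \<Rightarrow> real" and f :: "real \<Rightarrow> ereal"
  assumes "mono f"
  shows "is_min (f (Min (range c))) ((\<lambda>p. f (\<Sum>x\<in>UNIV. p x * c x)) ` prob_simplex)"
proof -
  have "Min (range c) \<in> range c" by (rule Min_in) auto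
  then obtain a where "Min (range c) = c a" by blast
  then have "f (Min (range c)) \<in> (\<lambda>p. f (\<Sum>x\<in>UNIV. p x * c x)) ` prob_simplex"
    by (intro image_eqI[OF _ indicator_in_prob_simplex[of a]]) (simp add: sum_indicator_singleton_mult)
  moreover have "f (Min (range c)) \<le> f (\<Sum>x\<in>UNIV. p x * c x)" if "p \<in> prob_simplex" for p
    using monoD[OF assms prob_simplex_average_ge_Min[OF that]] .
  ultimately show ?thesis unfolding is_min_def by blast
qed

lemma R_min_at_pure_strategy:
  assumes h: "\<And>y. 0 \<le> h y" and q: "q \<in> prob_simplex"
  shows "is_min (Min (range (\<lambda>x. R g h (indicator {x}) q))) ((\<lambda>p. R g h p q) ` prob_simplex)"
proof -
  define f where "f t = ereal t / ereal (\<Sum>y\<in>UNIV. q y * h y)" for t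
  have mono: "mono f" unfolding f_def
    using prob_simplexD(1)[OF q] h by (intro mono_ereal_divide sum_nonneg mult_nonneg_nonneg) auto
  have R_eq: "R g h p q = f (\<Sum>x\<in>UNIV. p x * (\<Sum>y\<in>UNIV. q y * g x y))" for p
    unfolding f_def R_eq_row_average ..
  have "Min (range (\<lambda>x. R g h (indicator {x}) q)) = f (Min (range (\<lambda>x. \<Sum>y\<in>UNIV. q y * g x y)))"
    using mono_Min_commute[OF mono, of "range (\<lambda>x. \<Sum>y\<in>UNIV. q y * g x y)"]
    by (simp add: R_eq sum_indicator_singleton_mult image_image)
  then show ?thesis unfolding R_eq using is_min_mono_average[OF mono] by simp
qed

lemma ratio_average_le_Max:
  fixes a h :: "'a::finite \<Rightarrow> real"
  assumes a: "\<And>y. 0 < a y" and h: "\<And>y. 0 \<le> h y" and q: "q \<in> prob_simplex"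
  shows "ereal (\<Sum>y\<in>UNIV. q y * a y) / ereal (\<Sum>y\<in>UNIV. q y * h y)
    \<le> Max (range (\<lambda>y. ereal (a y) / ereal (h y)))"
proof (cases "\<exists>y. h y = 0")
  case True
  then obtain y0 where "h y0 = 0" ..
  then have "ereal (a y0) / ereal (h y0) = \<infinity>" using a[of y0] by simp
  moreover have "ereal (a y0) / ereal (h y0) \<le> Max (range (\<lambda>y. ereal (a y) / ereal (h y)))"
    by (rule Max_ge) auto
  ultimately show ?thesis by simp
next
  case False
  then have h_pos: "0 < h y" for y using h[of y] by (metis less_eq_real_def)
  define M where "M = Max (range (\<lambda>y. a y / h y))"
  have D_pos: "0 < (\<Sum>y\<in>UNIV. q y * h y)" using prob_simplex_average_pos[OF q h_pos] .
  have "(\<Sum>y\<in>UNIV. q y * a y) = (\<Sum>y\<in>UNIV. (q y * h y) * (a y / h y))"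
    using h_pos by (intro sum.cong) (auto simp: less_imp_neq[symmetric])
  also have "\<dots> \<le> (\<Sum>y\<in>UNIV. (q y * h y) * M)"
    using prob_simplexD(1)[OF q] h unfolding M_def by (intro sum_mono mult_left_mono) auto
  also have "\<dots> = M * (\<Sum>y\<in>UNIV. q y * h y)" by (simp add: sum_distrib_left mult.commute)
  finally have "(\<Sum>y\<in>UNIV. q y * a y) / (\<Sum>y\<in>UNIV. q y * h y) \<le> M"
    using D_pos by (simp add: pos_divide_le_eq)
  moreover have "Max (range (\<lambda>y. ereal (a y) / ereal (h y))) = ereal M"
    using h_pos Max_range_ereal[of "\<lambda>y. a y / h y"] by (simp add: M_def less_imp_neq[symmetric])
  ultimately show ?thesis using D_pos by simp
qed

lemma R_pure_column_eq_E2: "R g h p (indicator {y}) = E2 g h p y"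
  unfolding R_eq_column_average E2_def by (simp add: sum_indicator_singleton_mult)

lemma R_max_at_pure_strategy:
  assumes g: "\<And>x y. 0 < g x y" and h: "\<And>y. 0 \<le> h y" and p: "p \<in> prob_simplex"
  shows "is_max (Max (range (\<lambda>y. E2 g h p y))) ((\<lambda>q. R g h p q) ` prob_simplex)"
proof -
  have "Max (range (\<lambda>y. E2 g h p y)) \<in> range (\<lambda>y. E2 g h p y)" by (rule Max_in) auto
  then obtain y where "Max (range (\<lambda>y. E2 g h p y)) = E2 g h p y" by blast
  then have "Max (range (\<lambda>y. E2 g h p y)) \<in> (\<lambda>q. R g h p q) ` prob_simplex"
    by (intro image_eqI[OF _ indicator_in_prob_simplex[of y]]) (simp add: R_pure_column_eq_E2)
  moreover have "R g h p q \<le> Max (range (\<lambda>y. E2 g h p y))" if "q \<in> prob_simplex" for q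
    using ratio_average_le_Max[OF prob_simplex_average_pos[OF p g] h that]
    unfolding R_eq_column_average E2_def .
  ultimately show ?thesis unfolding is_max_def by blast
qed

definition reweight :: "('a::finite \<Rightarrow> real) \<Rightarrow> ('a \<Rightarrow> real) \<Rightarrow> 'a \<Rightarrow> real" where
  "reweight w q y = q y * w y / (\<Sum>z\<in>UNIV. q z * w z)"

lemma reweight_in_prob_simplex:
  assumes w: "\<And>y. 0 < w y" and q: "q \<in> prob_simplex"
  shows "reweight w q \<in> prob_simplex"
  using prob_simplex_average_pos[of q w, OF q w] prob_simplexD(1)[OF q] w
  unfolding prob_simplex_def reweight_def
  by (auto simp: sum_divide_distrib[symmetric] less_imp_le)

lemma reweight_reweight_inverse:
  assumes w: "\<And>y. 0 < w y" and q: "q \<in> prob_simplex"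
  shows "reweight w (reweight (\<lambda>y. 1 / w y) q) = q"
proof
  fix y
  define s where "s = (\<Sum>z\<in>UNIV. q z / w z)"
  have "0 < s" unfolding s_def using prob_simplex_average_pos[of q "\<lambda>z. 1 / w z", OF q] w by simp
  have r: "reweight (\<lambda>y. 1 / w y) q z = q z / (w z * s)" for z
    unfolding reweight_def s_def by simp
  have "(\<Sum>z\<in>UNIV. reweight (\<lambda>y. 1 / w y) q z * w z) = (\<Sum>z\<in>UNIV. q z / s)"
    unfolding r using w by (intro sum.cong) (auto simp: less_imp_neq[symmetric])
  also have "\<dots> = 1 / s" using prob_simplexD(2)[OF q] by (simp add: sum_divide_distrib[symmetric])
  finally have D: "(\<Sum>z\<in>UNIV. reweight (\<lambda>y. 1 / w y) q z * w z) = 1 / s" .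
  have "reweight w (reweight (\<lambda>y. 1 / w y) q) y = reweight (\<lambda>y. 1 / w y) q y * w y / (1 / s)"
    by (simp only: reweight_def[of w] D)
  also have "\<dots> = q y" unfolding r using w[of y] \<open>0 < s\<close> by (simp add: field_simps)
  finally show "reweight w (reweight (\<lambda>y. 1 / w y) q) y = q y" .
qed

lemma reweight_image_prob_simplex:
  fixes w :: "'a::finite \<Rightarrow> real"
  assumes "\<And>y. 0 < w y"
  shows "reweight w ` prob_simplex = prob_simplex"
proof
  show "reweight w ` prob_simplex \<subseteq> prob_simplex"
    using reweight_in_prob_simplex[OF assms] by (rule image_subsetI)
  show "prob_simplex \<subseteq> reweight w ` prob_simplex"
  proof
    fix q :: "'a \<Rightarrow> real" assume q: "q \<in> prob_simplex"
    have "reweight (\<lambda>y. 1 / w y) q \<in> prob_simplex"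
      using reweight_in_prob_simplex[of "\<lambda>y. 1 / w y", OF _ q] assms by simp
    then show "q \<in> reweight w ` prob_simplex"
      by (rule rev_image_eqI) (simp add: reweight_reweight_inverse[OF assms q])
  qed
qed

lemma E1_eq_average:
  assumes "\<And>y. 0 < h y"
  shows "E1 g h q x = ereal (\<Sum>y\<in>UNIV. q y * (g x y / h y))"
  unfolding E1_def using assms by (simp add: less_imp_neq[symmetric])

lemma E2_eq_average:
  assumes "\<And>y. 0 < h y"
  shows "E2 g h p y = ereal (\<Sum>x\<in>UNIV. p x * (g x y / h y))"
  unfolding E2_def using assms[of y] by (simp add: sum_divide_distrib)

lemma R_pure_row_eq_E1_reweight:
  assumes h: "\<And>y. 0 < h y" and q: "q \<in> prob_simplex"
  shows "R g h (indicator {x}) q = E1 g h (reweight h q) x"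
proof -
  define D where "D = (\<Sum>y\<in>UNIV. q y * h y)"
  have "0 < D" unfolding D_def using prob_simplex_average_pos[of q h, OF q h] .
  have "(\<Sum>y\<in>UNIV. reweight h q y * (g x y / h y)) = (\<Sum>y\<in>UNIV. q y * g x y) / D"
    unfolding reweight_def D_def[symmetric] sum_divide_distrib
    using h by (intro sum.cong) (auto simp: less_imp_neq[symmetric])
  then show ?thesis using \<open>0 < D\<close>
    by (simp add: R_eq_row_average E1_eq_average[OF h] sum_indicator_singleton_mult D_def)
qed

lemma ratio_game_value_pos:
  fixes g :: "'x::finite \<Rightarrow> 'y::finite \<Rightarrow> real"
  assumes h: "\<And>y. 0 < h y"
  shows "\<exists>v. is_max v ((\<lambda>q. Min (range (\<lambda>x. E1 g h q x))) ` prob_simplex)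
    \<and> is_min v ((\<lambda>p. Max (range (\<lambda>y. E2 g h p y))) ` prob_simplex)
    \<and> is_max v ((\<lambda>q. INF p\<in>prob_simplex. R g h p q) ` prob_simplex)"
proof -
  obtain v where
    "is_max (ereal v) ((\<lambda>q. Min (range (\<lambda>x. E1 g h q x))) ` prob_simplex)"
    "is_min (ereal v) ((\<lambda>p. Max (range (\<lambda>y. E2 g h p y))) ` prob_simplex)"
    using matrix_game_value[of "\<lambda>x y. g x y / h y"] unfolding E1_eq_average[OF h] E2_eq_average[OF h] .
  moreover have "(INF p\<in>prob_simplex. R g h p q) = Min (range (\<lambda>x. E1 g h (reweight h q) x))"
    if "q \<in> prob_simplex" for q
    using is_min_imp_Inf_eq[OF R_min_at_pure_strategy[OF less_imp_le[OF h] that]]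
    by (simp add: R_pure_row_eq_E1_reweight[OF h that])
  then have "(\<lambda>q. INF p\<in>prob_simplex. R g h p q) ` prob_simplex
      = (\<lambda>q. Min (range (\<lambda>x. E1 g h q x))) ` reweight h ` prob_simplex"
    by (simp add: image_image)
  ultimately show ?thesis unfolding reweight_image_prob_simplex[OF h] by metis
qed

lemma is_max_PInfty_iff: "is_max \<infinity> S \<longleftrightarrow> \<infinity> \<in> S"
  unfolding is_max_def by simp

lemma is_min_PInfty_iff: "is_min \<infinity> S \<longleftrightarrow> S = {\<infinity>}"
  unfolding is_min_def by (auto simp: top_ereal_def[symmetric] top_unique)

lemma ratio_game_value_degenerate:
  fixes g :: "'x::finite \<Rightarrow> 'y::finite \<Rightarrow> real"
  assumes g: "\<And>x y. 0 < g x y" and h0: "h y0 = 0"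
  shows "is_max \<infinity> ((\<lambda>q. Min (range (\<lambda>x. E1 g h q x))) ` prob_simplex)
    \<and> is_min \<infinity> ((\<lambda>p. Max (range (\<lambda>y. E2 g h p y))) ` prob_simplex)
    \<and> is_max \<infinity> ((\<lambda>q. INF p\<in>prob_simplex. R g h p q) ` prob_simplex)"
proof -
  have "ereal (indicator {y0} y) * (ereal (g x y) / ereal (h y)) = (if y = y0 then \<infinity> else 0)" for x y
    using h0 g[of x y0] by (simp add: indicator_def)
  then have "E1 g h (indicator {y0}) x = \<infinity>" for x
    unfolding E1_def by simp
  then have i: "\<infinity> \<in> (\<lambda>q. Min (range (\<lambda>x. E1 g h q x))) ` prob_simplex"
    using indicator_in_prob_simplex by (intro image_eqI[of _ _ "indicator {y0}"]) auto
  have E2_y0: "E2 g h p y0 = \<infinity>" if "p \<in> prob_simplex" for p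
    using prob_simplex_average_pos[OF that, of "\<lambda>x. g x y0"] g h0 by (simp add: E2_def)
  have "Max (range (\<lambda>y. E2 g h p y)) = \<infinity>" if "p \<in> prob_simplex" for p
  proof -
    have "E2 g h p y0 \<le> Max (range (\<lambda>y. E2 g h p y))" by (rule Max_ge) auto
    then show ?thesis using E2_y0[OF that] by simp
  qed
  then have ii: "(\<lambda>p. Max (range (\<lambda>y. E2 g h p y))) ` prob_simplex = {\<infinity>}"
    using indicator_in_prob_simplex by auto
  have INF_y0: "(INF p\<in>prob_simplex. R g h p (indicator {y0})) = \<infinity>"
    using E2_y0 by (intro antisym INF_greatest) (auto simp: R_pure_column_eq_E2)
  have iii: "\<infinity> \<in> (\<lambda>q. INF p\<in>prob_simplex. R g h p q) ` prob_simplex"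
    using indicator_in_prob_simplex[of y0] by (rule rev_image_eqI) (simp add: INF_y0)
  show ?thesis unfolding is_max_PInfty_iff is_min_PInfty_iff using i ii iii by blast
qed

lemma ratio_game_value:
  fixes g :: "'x::finite \<Rightarrow> 'y::finite \<Rightarrow> real"
  assumes g: "\<And>x y. 0 < g x y" and h: "\<And>y. 0 \<le> h y"
  shows "\<exists>v. is_max v ((\<lambda>q. Min (range (\<lambda>x. E1 g h q x))) ` prob_simplex)
    \<and> is_min v ((\<lambda>p. Max (range (\<lambda>y. E2 g h p y))) ` prob_simplex)
    \<and> is_max v ((\<lambda>q. INF p\<in>prob_simplex. R g h p q) ` prob_simplex)"
proof (cases "\<forall>y. 0 < h y")
  case True
  then show ?thesis by (intro ratio_game_value_pos) auto
next
  case False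
  then obtain y0 where "\<not> 0 < h y0" by blast
  then have "h y0 = 0" using h[of y0] by simp
  then show ?thesis by (intro exI[of _ \<infinity>] ratio_game_value_degenerate[OF g])
qed

theorem theorem9:
  fixes g :: "'x::finite \<Rightarrow> 'y::finite \<Rightarrow> real" and h :: "'y \<Rightarrow> real"
  assumes g_pos: "\<And>x y. g x y > 0"
    and h_nonneg: "\<And>y. h y \<ge> 0"
  shows "(\<forall>q\<in>prob_simplex. \<exists>m. is_min m ((\<lambda>p. R g h p q) ` prob_simplex))
    \<and> (\<forall>p\<in>prob_simplex. \<exists>m. is_max m ((\<lambda>q. R g h p q) ` prob_simplex))
    \<and> (\<exists>v. is_max v ((\<lambda>q. Min (range (\<lambda>x. E1 g h q x))) ` prob_simplex)
          \<and> is_min v ((\<lambda>p. Max (range (\<lambda>y. E2 g h p y))) ` prob_simplex)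
          \<and> is_max v ((\<lambda>q. INF p\<in>prob_simplex. R g h p q) ` prob_simplex)
          \<and> is_min v ((\<lambda>p. SUP q\<in>prob_simplex. R g h p q) ` prob_simplex))"
proof -
  have "(SUP q\<in>prob_simplex. R g h p q) = Max (range (\<lambda>y. E2 g h p y))" if "p \<in> prob_simplex" for p
    using is_max_imp_Sup_eq[OF R_max_at_pure_strategy[OF g_pos h_nonneg that]] .
  then have SUP_image: "(\<lambda>p. SUP q\<in>prob_simplex. R g h p q) ` prob_simplex
      = (\<lambda>p. Max (range (\<lambda>y. E2 g h p y))) ` prob_simplex"
    by (rule image_cong[OF refl])
  obtain v where "is_max v ((\<lambda>q. Min (range (\<lambda>x. E1 g h q x))) ` prob_simplex)"
    and "is_min v ((\<lambda>p. Max (range (\<lambda>y. E2 g h p y))) ` prob_simplex)"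
    and "is_max v ((\<lambda>q. INF p\<in>prob_simplex. R g h p q) ` prob_simplex)"
    using ratio_game_value[of g h, OF g_pos h_nonneg] by blast
  then show ?thesis unfolding SUP_image
    using R_min_at_pure_strategy[of h, OF h_nonneg] R_max_at_pure_strategy[of g h, OF g_pos h_nonneg]
    by blast
qed

end
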